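(* Let $M^3$ be a real hypersurface in $\mathbb{C}P^2$ or $\mathbb{C}H^2$ and $p\in M$. If $AW\ne\alpha W$ at $p$, write $AW=\alpha W+\beta X$ with $\beta>0$ and $X\in W^\perp$ a unit vector; if $AW=\alpha W$ at $p$, let $X$ be any unit principal vector in $W^\perp$ and set $\beta=0$. Let $Y=\varphi X$, $\lambda=\langle AX,X\rangle$, $\mu=\langle AX,Y\rangle$, $\nu=\langle AY,Y\rangle$ (so $\mu=0$ in the second case). Then $(R(X,Y)\cdot S)X$ and $(R(X,Y)\cdot S)Y$ are multiples of $W$ at $p$ if and only if $\mu=0$ and $$\beta^2\nu^2=-(4c+\lambda\nu)\big(\alpha(\lambda-\nu)-\beta^2\big).$$
   Context: $\mathbb{C}P^2$, $\mathbb{C}H^2$ carry Kähler metrics of constant holomorphic sectional curvature $4c\ne0$, complex structure $J$, connection $\widetilde\nabla$. For a real hypersurface $M$ with unit normal $\xi$: $W$ with $JW=\xi$; $W^\perp$ the holomorphic distribution; $\varphi X=JX-\langle X,W\rangle\xi$; $AX=-\widetilde\nabla_X\xi$; $\alpha=\langle AW,W\rangle$; $R$ the curvature tensor of $M$; $S$ the Ricci tensor, $\langle SX,Y\rangle=\operatorname{trace}\{Z\mapsto R(Z,X)Y\}$; $R(X,Y)\cdot S=R(X,Y)\circ S-S\circ R(X,Y)$. *)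

theory Defs
  imports "HOL-Analysis.Analysis"
begin

text \<open>Pointwise (algebraic) model of a real hypersurface M^3 in a complex space form
  of constant holomorphic sectional curvature 4c at a point p.  The tangent space
  T_pM is a 3-dimensional Euclidean space 'a; W is the structure vector, phi the
  structure tensor (phi X = JX - <X,W> xi), A the shape operator.\<close>

definition ambient_structure :: "'a::euclidean_space \<Rightarrow> ('a \<Rightarrow> 'a) \<Rightarrow> bool" where
  "ambient_structure W phi \<longleftrightarrow>
     norm W = 1 \<and> linear phi \<and> phi W = 0 \<and>
     (\<forall>u. phi (phi u) = - u + (u \<bullet> W) *\<^sub>R W) \<and>
     (\<forall>u v. phi u \<bullet> v = - (u \<bullet> phi v))"

definition shape_operator :: "('a::euclidean_space \<Rightarrow> 'a) \<Rightarrow> bool" where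
  "shape_operator A \<longleftrightarrow> linear A \<and> (\<forall>u v. A u \<bullet> v = u \<bullet> A v)"

text \<open>Gauss equation: curvature tensor R(X,Y)Z of M.\<close>
definition curv :: "real \<Rightarrow> ('a::euclidean_space \<Rightarrow> 'a) \<Rightarrow> ('a \<Rightarrow> 'a) \<Rightarrow> 'a \<Rightarrow> 'a \<Rightarrow> 'a \<Rightarrow> 'a" where
  "curv c phi A X Y Z =
     c *\<^sub>R ((Y \<bullet> Z) *\<^sub>R X - (X \<bullet> Z) *\<^sub>R Y + (phi Y \<bullet> Z) *\<^sub>R phi X
            - (phi X \<bullet> Z) *\<^sub>R phi Y - (2 * (phi X \<bullet> Y)) *\<^sub>R phi Z)
     + (A Y \<bullet> Z) *\<^sub>R A X - (A X \<bullet> Z) *\<^sub>R A Y"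

definition ricci :: "real \<Rightarrow> ('a::euclidean_space \<Rightarrow> 'a) \<Rightarrow> ('a \<Rightarrow> 'a) \<Rightarrow> 'a \<Rightarrow> 'a" where
  "ricci c phi A X = (\<Sum>b\<in>Basis. (\<Sum>e\<in>Basis. curv c phi A e X b \<bullet> e) *\<^sub>R b)"

definition curv_dot_ricci :: "real \<Rightarrow> ('a::euclidean_space \<Rightarrow> 'a) \<Rightarrow> ('a \<Rightarrow> 'a) \<Rightarrow> 'a \<Rightarrow> 'a \<Rightarrow> 'a \<Rightarrow> 'a" where
  "curv_dot_ricci c phi A X Y Z =
     curv c phi A X Y (ricci c phi A Z) - ricci c phi A (curv c phi A X Y Z)"

end

theory Submission imports Defs begin

text \<open>Choose the orthonormal frame W, X, Y = \<phi>X. By the hypotheses on AW the shape operator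
  is tridiagonal in this frame, with entries \<alpha>, \<beta>, \<lambda>, \<mu>, \<nu>. The Gauss equation and a trace
  over the frame then give the matrices of R(X,Y) and of the Ricci tensor, so that (R(X,Y)\<cdot>S)X
  and (R(X,Y)\<cdot>S)Y have X- and Y-components that are explicit polynomials in c, \<alpha>, \<beta>, \<lambda>, \<mu>, \<nu>.
  Their vanishing is an elementary real-algebraic condition: if \<mu> \<noteq> 0 it forces \<beta> \<noteq> 0
  (as \<beta> = 0 makes X principal), then \<alpha> = 0 and \<nu> = 0, leaving the impossible 4c\<beta>^2 = 0.\<close>

lemma orthonormal_triple_expansion:
  fixes U V W v :: "'a::euclidean_space"
  assumes "DIM('a) = 3" "U \<bullet> U = 1" "V \<bullet> V = 1" "W \<bullet> W = 1"
    "U \<bullet> V = 0" "U \<bullet> W = 0" "V \<bullet> W = 0"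
  shows "v = (v \<bullet> U) *\<^sub>R U + (v \<bullet> V) *\<^sub>R V + (v \<bullet> W) *\<^sub>R W"
proof (rule ccontr)
  define d where "d = v - ((v \<bullet> U) *\<^sub>R U + (v \<bullet> V) *\<^sub>R V + (v \<bullet> W) *\<^sub>R W)"
  assume "\<not> ?thesis"
  hence "d \<noteq> 0" unfolding d_def by simp
  moreover have d_perp: "d \<bullet> U = 0" "d \<bullet> V = 0" "d \<bullet> W = 0"
    using assms by (simp_all add: d_def inner_simps inner_commute)
  ultimately have "independent {U, V, W, d}"
    using assms by (intro pairwise_orthogonal_independent)
      (auto simp: pairwise_def orthogonal_def inner_commute)
  hence "card {U, V, W, d} \<le> 3"
    using independent_bound assms(1) by metis
  moreover have "U \<noteq> V" "U \<noteq> W" "V \<noteq> W" "d \<noteq> U" "d \<noteq> V" "d \<noteq> W"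
    using assms d_perp by auto
  hence "card {U, V, W, d} = 4" by auto
  ultimately show False by simp
qed

lemma trace_orthonormal_triple:
  fixes U V W :: "'a::euclidean_space" and L :: "'a \<Rightarrow> 'a"
  assumes "DIM('a) = 3" "U \<bullet> U = 1" "V \<bullet> V = 1" "W \<bullet> W = 1"
    "U \<bullet> V = 0" "U \<bullet> W = 0" "V \<bullet> W = 0" "linear L"
  shows "(\<Sum>e\<in>Basis. L e \<bullet> e) = L U \<bullet> U + L V \<bullet> V + L W \<bullet> W"
proof -
  have "L e \<bullet> e = (L U \<bullet> e) * (U \<bullet> e) + (L V \<bullet> e) * (V \<bullet> e) + (L W \<bullet> e) * (W \<bullet> e)" for e
  proof -
    have "L e = L ((e \<bullet> U) *\<^sub>R U + (e \<bullet> V) *\<^sub>R V + (e \<bullet> W) *\<^sub>R W)"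
      using orthonormal_triple_expansion[OF assms(1-7)] by metis
    also have "\<dots> = (e \<bullet> U) *\<^sub>R L U + (e \<bullet> V) *\<^sub>R L V + (e \<bullet> W) *\<^sub>R L W"
      using assms(8) by (simp add: linear_add linear_scale)
    finally show ?thesis by (simp add: inner_simps inner_commute)
  qed
  hence "(\<Sum>e\<in>Basis. L e \<bullet> e) = (\<Sum>e\<in>Basis. (L U \<bullet> e) * (U \<bullet> e))
      + (\<Sum>e\<in>Basis. (L V \<bullet> e) * (V \<bullet> e)) + (\<Sum>e\<in>Basis. (L W \<bullet> e) * (W \<bullet> e))"
    by (simp add: sum.distrib)
  also have "\<dots> = L U \<bullet> U + L V \<bullet> V + L W \<bullet> W"
    by (simp add: euclidean_inner[symmetric])
  finally show ?thesis .
qed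

lemma linear_curv_first_arg:
  assumes "linear phi" "linear A"
  shows "linear (\<lambda>e. curv c phi A e Z V)"
  using assms unfolding curv_def
  by (intro linearI) (simp_all add: linear_add linear_scale algebra_simps inner_simps)

lemma ricci_inner_eq_trace:
  fixes Z V :: "'a::euclidean_space"
  assumes skew: "\<And>u v. phi u \<bullet> v = - (u \<bullet> phi v)"
  shows "ricci c phi A Z \<bullet> V = (\<Sum>e\<in>Basis. curv c phi A e Z V \<bullet> e)"
proof -
  text \<open>Skew-symmetry of \<phi> makes \<open>curv c phi A e Z U \<bullet> e\<close> linear in U, represented by G e.\<close>
  define G where "G e = c *\<^sub>R ((e \<bullet> e) *\<^sub>R Z - (Z \<bullet> e) *\<^sub>R e + (phi e \<bullet> e) *\<^sub>R phi Z
     - (phi Z \<bullet> e) *\<^sub>R phi e + (2 * (phi e \<bullet> Z)) *\<^sub>R phi e) + (A e \<bullet> e) *\<^sub>R A Z - (A Z \<bullet> e) *\<^sub>R A e"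
    for e
  have G: "curv c phi A e Z U \<bullet> e = U \<bullet> G e" for e U
    using skew[of U e] unfolding curv_def G_def
    by (simp add: inner_simps inner_commute algebra_simps)
  have "ricci c phi A Z \<bullet> V = (\<Sum>b\<in>Basis. \<Sum>e\<in>Basis. (b \<bullet> G e) * (b \<bullet> V))"
    unfolding ricci_def by (simp add: inner_sum_left G sum_distrib_right)
  also have "\<dots> = (\<Sum>e\<in>Basis. \<Sum>b\<in>Basis. (b \<bullet> G e) * (b \<bullet> V))"
    by (rule sum.swap)
  also have "\<dots> = (\<Sum>e\<in>Basis. V \<bullet> G e)"
    by (simp add: euclidean_inner[of V] inner_commute mult.commute)
  finally show ?thesis by (simp add: G)
qed

locale adapted_frame =
  fixes c :: real and W X :: "'a::euclidean_space" and phi A :: "'a \<Rightarrow> 'a" and \<beta> :: real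
  assumes dim3: "DIM('a) = 3"
    and ambient: "ambient_structure W phi"
    and shape: "shape_operator A"
    and unit_X: "norm X = 1" and X_perp_W: "X \<bullet> W = 0"
    and A_W: "A W = (A W \<bullet> W) *\<^sub>R W + \<beta> *\<^sub>R X"
begin

definition Y where "Y = phi X"
definition alpha where "alpha = A W \<bullet> W"
definition lam where "lam = A X \<bullet> X"
definition mu where "mu = A X \<bullet> Y"
definition nu where "nu = A Y \<bullet> Y"

text \<open>The sectional curvature of the plane spanned by X and Y.\<close>
definition kappa where "kappa = 4 * c + lam * nu - mu\<^sup>2"

lemma phi_W: "phi W = 0"
  and phi_phi: "phi (phi u) = - u + (u \<bullet> W) *\<^sub>R W"
  and phi_skew: "phi u \<bullet> v = - (u \<bullet> phi v)"
  and linear_phi: "linear phi"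
  and unit_W: "W \<bullet> W = 1"
  using ambient unfolding ambient_structure_def by (auto simp: norm_eq_1)

lemma linear_A: "linear A" and A_self_adjoint: "A u \<bullet> v = u \<bullet> A v"
  using shape unfolding shape_operator_def by auto

lemma phi_X: "phi X = Y" and phi_Y: "phi Y = - X"
  using phi_phi[of X] X_perp_W by (simp_all add: Y_def)

lemma frame_orthonormal:
  "W \<bullet> W = 1" "X \<bullet> X = 1" "Y \<bullet> Y = 1" "W \<bullet> X = 0" "W \<bullet> Y = 0" "X \<bullet> Y = 0"
  using unit_W unit_X X_perp_W phi_skew[of X Y] phi_skew[of X W] phi_skew[of X X]
  by (simp_all add: norm_eq_1 phi_X phi_Y phi_W inner_commute)

lemma frame_orthogonal_commuted: "X \<bullet> W = 0" "Y \<bullet> W = 0" "Y \<bullet> X = 0"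
  using frame_orthonormal by (simp_all add: inner_commute)

lemmas frame_expansion = orthonormal_triple_expansion[OF dim3 frame_orthonormal]

lemma A_frame:
  "A W = alpha *\<^sub>R W + \<beta> *\<^sub>R X"
  "A X = \<beta> *\<^sub>R W + lam *\<^sub>R X + mu *\<^sub>R Y"
  "A Y = mu *\<^sub>R X + nu *\<^sub>R Y"
proof -
  show AW: "A W = alpha *\<^sub>R W + \<beta> *\<^sub>R X"
    using A_W by (simp add: alpha_def)
  have "A X \<bullet> W = \<beta>" "A Y \<bullet> W = 0" "A Y \<bullet> X = mu"
    using A_self_adjoint[of X W] A_self_adjoint[of Y W] A_self_adjoint[of Y X] AW frame_orthonormal
    by (simp_all add: inner_simps inner_commute mu_def)
  then show "A X = \<beta> *\<^sub>R W + lam *\<^sub>R X + mu *\<^sub>R Y" "A Y = mu *\<^sub>R X + nu *\<^sub>R Y"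
    using frame_expansion[of "A X"] frame_expansion[of "A Y"] by (simp_all add: lam_def mu_def nu_def)
qed

lemma inner_phi_frame: "phi Z \<bullet> W = 0" "phi Z \<bullet> X = - (Z \<bullet> Y)" "phi Z \<bullet> Y = Z \<bullet> X"
  using phi_skew[of Z W] phi_skew[of Z X] phi_skew[of Z Y] by (simp_all add: phi_W phi_X phi_Y)

lemma inner_A_frame:
  "A Z \<bullet> W = alpha * (Z \<bullet> W) + \<beta> * (Z \<bullet> X)"
  "A Z \<bullet> X = \<beta> * (Z \<bullet> W) + lam * (Z \<bullet> X) + mu * (Z \<bullet> Y)"
  "A Z \<bullet> Y = mu * (Z \<bullet> X) + nu * (Z \<bullet> Y)"
  using A_self_adjoint[of Z W] A_self_adjoint[of Z X] A_self_adjoint[of Z Y]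
  by (simp_all add: A_frame inner_simps)

lemma ricci_inner_frame_trace:
  "ricci c phi A Z \<bullet> V = curv c phi A W Z V \<bullet> W + curv c phi A X Z V \<bullet> X + curv c phi A Y Z V \<bullet> Y"
  using ricci_inner_eq_trace[OF phi_skew]
    trace_orthonormal_triple[OF dim3 frame_orthonormal linear_curv_first_arg[OF linear_phi linear_A]]
  by simp

lemmas frame_simps = inner_simps phi_W phi_X phi_Y A_frame frame_orthonormal
  frame_orthogonal_commuted inner_phi_frame inner_A_frame power2_eq_square

lemma ricci_inner_frame:
  "ricci c phi A Z \<bullet> W =
     (2 * c + alpha * (lam + nu) - \<beta>\<^sup>2) * (Z \<bullet> W) + \<beta> * nu * (Z \<bullet> X) - \<beta> * mu * (Z \<bullet> Y)"
  "ricci c phi A Z \<bullet> X =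
     \<beta> * nu * (Z \<bullet> W) + (5 * c + lam * (alpha + nu) - \<beta>\<^sup>2 - mu\<^sup>2) * (Z \<bullet> X) + alpha * mu * (Z \<bullet> Y)"
  "ricci c phi A Z \<bullet> Y =
     - \<beta> * mu * (Z \<bullet> W) + alpha * mu * (Z \<bullet> X) + (5 * c + nu * (alpha + lam) - mu\<^sup>2) * (Z \<bullet> Y)"
  using inner_commute[of W Z] inner_commute[of X Z] inner_commute[of Y Z]
  unfolding ricci_inner_frame_trace curv_def by (simp_all add: frame_simps algebra_simps)

lemma curv_XY_inner_frame:
  "curv c phi A X Y Z \<bullet> W = \<beta> * mu * (Z \<bullet> X) + \<beta> * nu * (Z \<bullet> Y)"
  "curv c phi A X Y Z \<bullet> X = - \<beta> * mu * (Z \<bullet> W) + kappa * (Z \<bullet> Y)"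
  "curv c phi A X Y Z \<bullet> Y = - \<beta> * nu * (Z \<bullet> W) - kappa * (Z \<bullet> X)"
  using inner_commute[of W Z] inner_commute[of X Z] inner_commute[of Y Z]
  unfolding curv_def kappa_def by (simp_all add: frame_simps algebra_simps)

lemma curv_dot_ricci_frame:
  "curv_dot_ricci c phi A X Y X \<bullet> X = 2 * mu * (alpha * kappa - \<beta>\<^sup>2 * nu)"
  "curv_dot_ricci c phi A X Y X \<bullet> Y = \<beta>\<^sup>2 * (mu\<^sup>2 - nu\<^sup>2) + kappa * (alpha * (nu - lam) + \<beta>\<^sup>2)"
  "curv_dot_ricci c phi A X Y Y \<bullet> X = \<beta>\<^sup>2 * (mu\<^sup>2 - nu\<^sup>2) + kappa * (alpha * (nu - lam) + \<beta>\<^sup>2)"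
  "curv_dot_ricci c phi A X Y Y \<bullet> Y = - 2 * mu * (alpha * kappa - \<beta>\<^sup>2 * nu)"
  unfolding curv_dot_ricci_def inner_diff_left
  by (simp_all add: curv_XY_inner_frame ricci_inner_frame frame_orthonormal
      frame_orthogonal_commuted power2_eq_square algebra_simps)

lemma multiple_of_W_iff: "(\<exists>k. V = k *\<^sub>R W) \<longleftrightarrow> V \<bullet> X = 0 \<and> V \<bullet> Y = 0"
proof
  assume "V \<bullet> X = 0 \<and> V \<bullet> Y = 0"
  then have "V = (V \<bullet> W) *\<^sub>R W"
    using frame_expansion[of V] by simp
  then show "\<exists>k. V = k *\<^sub>R W" ..
qed (auto simp: frame_orthonormal)

end

lemma frame_curvature_condition_iff:
  fixes c a b l m n :: real
  assumes "c \<noteq> 0" and "b = 0 \<Longrightarrow> m = 0"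
  defines "K \<equiv> 4 * c + l * n - m\<^sup>2"
  shows "(m * (a * K - b\<^sup>2 * n) = 0 \<and> b\<^sup>2 * (m\<^sup>2 - n\<^sup>2) + K * (a * (n - l) + b\<^sup>2) = 0)
    \<longleftrightarrow> (m = 0 \<and> b\<^sup>2 * n\<^sup>2 = - (4 * c + l * n) * (a * (l - n) - b\<^sup>2))"
    (is "(m * ?E = 0 \<and> ?F = 0) \<longleftrightarrow> _")
proof
  assume h: "m * ?E = 0 \<and> ?F = 0"
  have "m = 0"
  proof (rule ccontr)
    assume "m \<noteq> 0"
    then have E: "?E = 0" and "b \<noteq> 0" using h assms(2) by auto
    have "a * ?F = 4 * c * a * b\<^sup>2 + ?E * a * (n - l)"
      unfolding K_def by (simp add: power2_eq_square algebra_simps)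
    then have "a = 0" using h E \<open>c \<noteq> 0\<close> \<open>b \<noteq> 0\<close> by simp
    then have "n = 0" using E \<open>b \<noteq> 0\<close> by simp
    then have "?F = 4 * c * b\<^sup>2" using \<open>a = 0\<close> by (simp add: K_def algebra_simps)
    then show False using h \<open>c \<noteq> 0\<close> \<open>b \<noteq> 0\<close> by simp
  qed
  then show "m = 0 \<and> b\<^sup>2 * n\<^sup>2 = - (4 * c + l * n) * (a * (l - n) - b\<^sup>2)"
    using h by (simp add: K_def power2_eq_square algebra_simps)
qed (simp add: K_def power2_eq_square algebra_simps)

theorem proposition9:
  fixes W X :: "'a::euclidean_space" and phi A :: "'a \<Rightarrow> 'a" and c \<beta> :: real
  assumes "DIM('a) = 3"
    and "c \<noteq> 0"
    and "ambient_structure W phi"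
    and "shape_operator A"
    and "norm X = 1" and "X \<bullet> W = 0"
    and "\<beta> \<ge> 0"
    and "A W = (A W \<bullet> W) *\<^sub>R W + \<beta> *\<^sub>R X"
    and "\<beta> = 0 \<longrightarrow> (\<exists>l. A X = l *\<^sub>R X)"
  shows "let alpha = A W \<bullet> W; Y = phi X; lam = A X \<bullet> X; mu = A X \<bullet> Y; nu = A Y \<bullet> Y in
    ((\<exists>k. curv_dot_ricci c phi A X Y X = k *\<^sub>R W) \<and>
     (\<exists>k. curv_dot_ricci c phi A X Y Y = k *\<^sub>R W))
    \<longleftrightarrow> (mu = 0 \<and> \<beta>\<^sup>2 * nu\<^sup>2 = - (4 * c + lam * nu) * (alpha * (lam - nu) - \<beta>\<^sup>2))"
proof -
  interpret adapted_frame c W X phi A \<beta>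
    using assms by unfold_locales
  have "mu = 0" if "\<beta> = 0"
  proof -
    obtain l where "A X = l *\<^sub>R X" using assms(9) \<open>\<beta> = 0\<close> by blast
    then show ?thesis by (simp add: mu_def frame_orthonormal)
  qed
  then show ?thesis
    using frame_curvature_condition_iff[OF \<open>c \<noteq> 0\<close>, of \<beta> mu alpha lam nu]
    unfolding Let_def Y_def[symmetric] alpha_def[symmetric] lam_def[symmetric] mu_def[symmetric]
      nu_def[symmetric] multiple_of_W_iff curv_dot_ricci_frame
    by (auto simp: kappa_def)
qed

end
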